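(* Let $a\in C(\mathbb{R}^2)$ be $\mathbb{Z}^2$-periodic with $\inf a>0$, $\gamma>0$, $b\ge0$, $p\ge2$, $q\ge2p$. If $(u_n)\subset X$ satisfies $I(u_n)\to d>0$ and $\|I'(u_n)\|_{X'}(1+\|u_n\|_X)\to0$, then $(u_n)$ is bounded in $H^1(\mathbb{R}^2)$.
   Context: $X:=\{u\in H^1(\mathbb{R}^2):\int\log(1+|x|)|u|^p<\infty\}$, norm $\|u\|_X:=\|u\|_{H^1}+(\int\log(1+|x|)|u|^p)^{1/p}$, $\|u\|_{H^1}^2:=\int(|\nabla u|^2+a(x)u^2)$. $I(u):=\frac12\|u\|_{H^1}^2+\frac{\gamma}{4p\pi}\iint\log(|x-y|)|u|^p(x)|u|^p(y)\,dx\,dy-\frac bq\int|u|^q$. *)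

theory Defs
  imports "HOL-Analysis.Analysis"
begin

type_synonym R2 = "real ^ 2"

definition test_fun :: "(R2 \<Rightarrow> real) \<Rightarrow> (R2 \<Rightarrow> R2 \<Rightarrow> real) \<Rightarrow> bool" where
  "test_fun phi Dphi \<longleftrightarrow>
     (\<forall>x. (phi has_derivative Dphi x) (at x)) \<and>
     (\<forall>v. continuous_on UNIV (\<lambda>x. Dphi x v)) \<and>
     (\<exists>R. \<forall>x. norm x > R \<longrightarrow> phi x = 0)"

definition weak_grad :: "(R2 \<Rightarrow> real) \<Rightarrow> (R2 \<Rightarrow> R2) \<Rightarrow> bool" where
  "weak_grad u g \<longleftrightarrow>
     (\<forall>phi Dphi. test_fun phi Dphi \<longrightarrow>
        (\<forall>i. (LINT x|lborel. u x * Dphi x (axis i 1)) = - (LINT x|lborel. g x $ i * phi x)))"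

definition L2grad :: "(R2 \<Rightarrow> real) \<Rightarrow> (R2 \<Rightarrow> R2) \<Rightarrow> bool" where
  "L2grad u g \<longleftrightarrow> g \<in> borel_measurable lborel \<and>
     integrable lborel (\<lambda>x. (norm (g x))\<^sup>2) \<and> weak_grad u g"

definition H1 :: "(R2 \<Rightarrow> real) \<Rightarrow> bool" where
  "H1 u \<longleftrightarrow> u \<in> borel_measurable lborel \<and> integrable lborel (\<lambda>x. (u x)\<^sup>2) \<and> (\<exists>g. L2grad u g)"

definition grad :: "(R2 \<Rightarrow> real) \<Rightarrow> (R2 \<Rightarrow> R2)" where
  "grad u = (SOME g. L2grad u g)"

definition H1norm :: "(R2 \<Rightarrow> real) \<Rightarrow> (R2 \<Rightarrow> real) \<Rightarrow> real" where
  "H1norm a u = sqrt (LINT x|lborel. (norm (grad u x))\<^sup>2 + a x * (u x)\<^sup>2)"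

definition inX :: "real \<Rightarrow> (R2 \<Rightarrow> real) \<Rightarrow> bool" where
  "inX p u \<longleftrightarrow> H1 u \<and> integrable lborel (\<lambda>x. ln (1 + norm x) * \<bar>u x\<bar> powr p)"

definition Xnorm :: "(R2 \<Rightarrow> real) \<Rightarrow> real \<Rightarrow> (R2 \<Rightarrow> real) \<Rightarrow> real" where
  "Xnorm a p u = H1norm a u + (LINT x|lborel. ln (1 + norm x) * \<bar>u x\<bar> powr p) powr (1 / p)"

definition Ifun :: "(R2 \<Rightarrow> real) \<Rightarrow> real \<Rightarrow> real \<Rightarrow> real \<Rightarrow> real \<Rightarrow> (R2 \<Rightarrow> real) \<Rightarrow> real" where
  "Ifun a \<gamma> b p q u =
     1 / 2 * (H1norm a u)\<^sup>2
     + \<gamma> / (4 * p * pi) *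
         (LINT x|lborel. LINT y|lborel. ln (norm (x - y)) * \<bar>u x\<bar> powr p * \<bar>u y\<bar> powr p)
     - b / q * (LINT x|lborel. \<bar>u x\<bar> powr q)"

definition X_deriv :: "(R2 \<Rightarrow> real) \<Rightarrow> real \<Rightarrow> ((R2 \<Rightarrow> real) \<Rightarrow> real) \<Rightarrow> (R2 \<Rightarrow> real)
    \<Rightarrow> ((R2 \<Rightarrow> real) \<Rightarrow> real) \<Rightarrow> bool" where
  "X_deriv a p F u L \<longleftrightarrow>
     (\<forall>v w. inX p v \<longrightarrow> inX p w \<longrightarrow> L (\<lambda>x. v x + w x) = L v + L w) \<and>
     (\<forall>c v. inX p v \<longrightarrow> L (\<lambda>x. c * v x) = c * L v) \<and>
     (\<exists>K. \<forall>v. inX p v \<longrightarrow> \<bar>L v\<bar> \<le> K * Xnorm a p v) \<and>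
     (\<forall>\<epsilon>>0. \<exists>\<delta>>0. \<forall>v. inX p v \<longrightarrow> Xnorm a p v < \<delta> \<longrightarrow>
        \<bar>F (\<lambda>x. u x + v x) - F u - L v\<bar> \<le> \<epsilon> * Xnorm a p v)"

definition dual_normX :: "(R2 \<Rightarrow> real) \<Rightarrow> real \<Rightarrow> ((R2 \<Rightarrow> real) \<Rightarrow> real) \<Rightarrow> real" where
  "dual_normX a p L = Sup {\<bar>L v\<bar> | v. inX p v \<and> Xnorm a p v \<le> 1}"

end

theory Submission
  imports Defs
begin

text \<open>Test the Palais--Smale derivative against \<open>u\<^sub>n\<close> itself. Since the three terms of \<open>I\<close> are
  homogeneous of degrees \<open>2\<close>, \<open>2 p\<close> and \<open>q\<close> along rays, differentiating \<open>t \<mapsto> I((1 + t) u)\<close>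
  gives \<open>I'(u) u = \<parallel>u\<parallel>\<^sup>2 + \<gamma>/(2\<pi>) B(u) - b \<parallel>u\<parallel>\<^sub>q\<^sup>q\<close>; the homogeneity of the
  \<open>H\<^sup>1\<close> norm needs the weak gradient to be unique almost everywhere, which is proved by testing
  against smooth approximations of box indicators. In \<open>I(u) - I'(u) u / (2 p)\<close> the logarithmic
  term cancels and, as \<open>q \<ge> 2 p\<close>, the \<open>L\<^sup>q\<close> term is nonnegative, so
  \<open>\<parallel>u\<^sub>n\<parallel>\<^sup>2 / 4 \<le> I(u\<^sub>n) + \<parallel>I'(u\<^sub>n)\<parallel> (1 + \<parallel>u\<^sub>n\<parallel>\<^sub>X)\<close>, and both terms on the right are bounded.\<close>

section \<open>Test functions approximating box indicators\<close>

definition C1_fun :: "(R2 \<Rightarrow> real) \<Rightarrow> (R2 \<Rightarrow> R2 \<Rightarrow> real) \<Rightarrow> bool" where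
  "C1_fun f Df \<longleftrightarrow> (\<forall>x. (f has_derivative Df x) (at x)) \<and> (\<forall>v. continuous_on UNIV (\<lambda>x. Df x v))"

lemma C1_fun_continuous: "C1_fun f Df \<Longrightarrow> continuous_on UNIV f"
  unfolding C1_fun_def by (meson continuous_at_imp_continuous_on has_derivative_continuous)

lemma C1_fun_affine_coord: "C1_fun (\<lambda>x. \<alpha> * x $ i + \<beta>) (\<lambda>x v. \<alpha> * v $ i)"
  unfolding C1_fun_def
  by (auto intro!: derivative_eq_intros bounded_linear_imp_has_derivative[OF bounded_linear_vec_nth])

lemma C1_fun_mult:
  assumes "C1_fun f Df" "C1_fun g Dg"
  shows "C1_fun (\<lambda>x. f x * g x) (\<lambda>x v. f x * Dg x v + Df x v * g x)"
  using assms C1_fun_continuous[OF assms(1)] C1_fun_continuous[OF assms(2)]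
  unfolding C1_fun_def by (auto intro!: derivative_eq_intros continuous_intros)

lemma C1_fun_compose:
  assumes f: "C1_fun f Df" and \<psi>: "\<And>s. (\<psi> has_real_derivative \<psi>' s) (at s)"
    and \<psi>'_cont: "continuous_on UNIV \<psi>'"
  shows "C1_fun (\<lambda>x. \<psi> (f x)) (\<lambda>x v. \<psi>' (f x) * Df x v)"
  unfolding C1_fun_def
proof (intro conjI allI)
  fix x
  have "(\<psi> has_derivative (\<lambda>h. \<psi>' (f x) * h)) (at (f x))"
    using \<psi> by (simp add: has_field_derivative_def)
  with f show "((\<lambda>x. \<psi> (f x)) has_derivative (\<lambda>v. \<psi>' (f x) * Df x v)) (at x)"
    unfolding C1_fun_def by (auto intro: has_derivative_compose[of f "Df x" x UNIV \<psi>, simplified])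
next
  fix v
  show "continuous_on UNIV (\<lambda>x. \<psi>' (f x) * Df x v)"
    using f unfolding C1_fun_def
    by (auto intro!: continuous_intros continuous_on_compose2[OF \<psi>'_cont C1_fun_continuous[OF f]])
qed

definition pos_sq :: "real \<Rightarrow> real" where "pos_sq t = (max 0 t)\<^sup>2"

lemma pos_sq_nonneg: "pos_sq t \<ge> 0"
  by (simp add: pos_sq_def)

lemma pos_sq_pos_iff: "pos_sq t > 0 \<longleftrightarrow> t > 0"
  by (auto simp: pos_sq_def max_def)

lemma DERIV_pos_sq: "(pos_sq has_real_derivative 2 * max 0 t) (at t)"
proof (cases t "0::real" rule: linorder_cases)
  case less
  have "\<forall>\<^sub>F s in nhds t. 0 = pos_sq s"
    using eventually_nhds_in_open[of "{..<0}" t] less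
    by (auto simp: pos_sq_def elim!: eventually_mono)
  from DERIV_cong_ev[OF refl this refl, of 0] have "(pos_sq has_real_derivative 0) (at t)"
    by simp
  with less show ?thesis
    by (simp add: max_def)
next
  case equal
  have "\<forall>\<^sub>F h in at (0::real). (pos_sq h - pos_sq 0) / h = max 0 h"
    unfolding eventually_at_filter by (auto simp: pos_sq_def power2_eq_square max_def)
  moreover have "((\<lambda>h::real. max 0 h) \<longlongrightarrow> 0) (at 0)"
    using tendsto_max[OF tendsto_const tendsto_ident_at, of 0 0 UNIV] by simp
  ultimately show ?thesis
    using equal by (simp add: DERIV_def tendsto_cong)
next
  case greater
  have "\<forall>\<^sub>F s in nhds t. s\<^sup>2 = pos_sq s"
    using eventually_nhds_in_open[of "{0<..}" t] greater
    by (auto simp: pos_sq_def elim!: eventually_mono)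
  from DERIV_cong_ev[OF refl this refl, of "2 * t"] have "(pos_sq has_real_derivative 2 * t) (at t)"
    by (auto intro!: derivative_eq_intros)
  with greater show ?thesis
    by (simp add: max_def)
qed

text \<open>Each factor is written as \<open>pos_sq (\<alpha> * x$i + \<beta>)\<close> to match \<open>C1_fun_affine_coord\<close>.\<close>
definition box_bump :: "R2 \<Rightarrow> R2 \<Rightarrow> R2 \<Rightarrow> real" where
  "box_bump l r x = pos_sq (1 * x$1 + - l$1) * pos_sq (-1 * x$1 + r$1)
     * pos_sq (1 * x$2 + - l$2) * pos_sq (-1 * x$2 + r$2)"

lemma C1_box_bump: "\<exists>D. C1_fun (box_bump l r) D"
proof -
  have "continuous_on UNIV (\<lambda>t::real. 2 * max 0 t)"
    by (intro continuous_intros)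
  then have coord: "\<exists>D. C1_fun (\<lambda>x. pos_sq (\<alpha> * x $ i + \<beta>)) D" for \<alpha> \<beta> i
    using C1_fun_compose[OF C1_fun_affine_coord DERIV_pos_sq] by blast
  obtain D1 D2 D3 D4 where
    "C1_fun (\<lambda>x. pos_sq (1 * x$1 + - l$1)) D1" "C1_fun (\<lambda>x. pos_sq (-1 * x$1 + r$1)) D2"
    "C1_fun (\<lambda>x. pos_sq (1 * x$2 + - l$2)) D3" "C1_fun (\<lambda>x. pos_sq (-1 * x$2 + r$2)) D4"
    using coord by metis
  from C1_fun_mult[OF C1_fun_mult[OF C1_fun_mult[OF this(1,2)] this(3)] this(4)]
  show ?thesis unfolding box_bump_def[abs_def] by blast
qed

lemma box_bump_nonneg: "box_bump l r x \<ge> 0"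
  unfolding box_bump_def by (intro mult_nonneg_nonneg pos_sq_nonneg)

lemma box_bump_pos_iff: "box_bump l r x > 0 \<longleftrightarrow> x \<in> box l r"
proof -
  have not_neg: "\<not> pos_sq s < 0" for s
    by (simp add: not_less pos_sq_nonneg)
  have "box_bump l r x > 0 \<longleftrightarrow> pos_sq (1 * x$1 + - l$1) > 0 \<and> pos_sq (-1 * x$1 + r$1) > 0 \<and>
      pos_sq (1 * x$2 + - l$2) > 0 \<and> pos_sq (-1 * x$2 + r$2) > 0"
    unfolding box_bump_def
    by (simp add: zero_less_mult_iff not_neg del: pos_sq_pos_iff)
  then show ?thesis
    by (auto simp: pos_sq_pos_iff mem_box_cart forall_2)
qed

lemma box_bump_eq_0: "x \<notin> box l r \<Longrightarrow> box_bump l r x = 0"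
  using box_bump_nonneg box_bump_pos_iff by (metis less_eq_real_def)

definition saturate :: "real \<Rightarrow> real \<Rightarrow> real" where
  "saturate k s = k * s\<^sup>2 / (1 + k * s\<^sup>2)"

lemma saturate_denom_pos: "(k::real) \<ge> 0 \<Longrightarrow> 1 + k * s\<^sup>2 > 0"
  by (simp add: add_pos_nonneg)

lemma DERIV_saturate:
  assumes "(k::real) \<ge> 0"
  shows "(saturate k has_real_derivative 2 * k * s / (1 + k * s\<^sup>2)\<^sup>2) (at s)"
proof -
  have "1 + k * s\<^sup>2 \<noteq> 0"
    using saturate_denom_pos[of k s] assms by linarith
  then show ?thesis
    unfolding saturate_def[abs_def]
    by (auto intro!: derivative_eq_intros simp: power2_eq_square field_simps)
qed

lemma continuous_on_saturate_deriv:
  "(k::real) \<ge> 0 \<Longrightarrow> continuous_on UNIV (\<lambda>s. 2 * k * s / (1 + k * s\<^sup>2)\<^sup>2)"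
  by (intro continuous_intros) (metis saturate_denom_pos less_irrefl power_eq_0_iff)

lemma saturate_bounds: "(k::real) \<ge> 0 \<Longrightarrow> 0 \<le> saturate k s \<and> saturate k s \<le> 1"
  using saturate_denom_pos[of k s] by (simp add: saturate_def divide_le_eq)

lemma saturate_tendsto_1:
  assumes "s \<noteq> 0"
  shows "(\<lambda>n. saturate (real n) s) \<longlonglongrightarrow> 1"
proof -
  have "filterlim (\<lambda>n. 1 + real n * s\<^sup>2) at_top sequentially"
    using assms
    by (intro filterlim_tendsto_add_at_top[OF tendsto_const]
        filterlim_at_top_mult_tendsto_pos[OF tendsto_const] filterlim_real_sequentially) auto
  then have "(\<lambda>n. 1 - 1 / (1 + real n * s\<^sup>2)) \<longlonglongrightarrow> 1 - 0"
    by (intro tendsto_intros) (simp add: tendsto_divide_0 tendsto_inverse_0_at_top divide_inverse_commute)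
  moreover have "saturate (real n) s = 1 - 1 / (1 + real n * s\<^sup>2)" for n
    using saturate_denom_pos[of "real n" s] by (simp add: saturate_def field_simps)
  ultimately show ?thesis
    by simp
qed

definition box_approx :: "real \<Rightarrow> R2 \<Rightarrow> R2 \<Rightarrow> R2 \<Rightarrow> real" where
  "box_approx k l r x = saturate k (box_bump l r x)"

lemma test_fun_box_approx:
  assumes "k \<ge> 0"
  shows "\<exists>D. test_fun (box_approx k l r) D"
proof -
  obtain D where "C1_fun (box_bump l r) D"
    using C1_box_bump by blast
  from C1_fun_compose[OF this DERIV_saturate[OF assms] continuous_on_saturate_deriv[OF assms]]
  obtain D' where C1: "C1_fun (box_approx k l r) D'"
    unfolding box_approx_def[abs_def] by blast
  obtain R where "\<forall>x. R < norm x \<longrightarrow> x \<notin> box l r"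
    using bounded_box[of l r] unfolding bounded_iff by (meson not_less)
  then have "\<forall>x. R < norm x \<longrightarrow> box_approx k l r x = 0"
    by (simp add: box_approx_def box_bump_eq_0 saturate_def)
  with C1 show ?thesis
    unfolding test_fun_def C1_fun_def by blast
qed

lemma test_fun_measurable:
  assumes "test_fun \<phi> D"
  shows "\<phi> \<in> borel_measurable lborel"
proof -
  have "continuous_on UNIV \<phi>"
    using assms unfolding test_fun_def
    by (meson continuous_at_imp_continuous_on has_derivative_continuous)
  then show ?thesis
    by (simp add: borel_measurable_continuous_onI)
qed

lemma box_approx_measurable: "k \<ge> 0 \<Longrightarrow> box_approx k l r \<in> borel_measurable lborel"
  using test_fun_box_approx test_fun_measurable by blast

lemma box_approx_le_indicator: "k \<ge> 0 \<Longrightarrow> \<bar>box_approx k l r x\<bar> \<le> indicator (box l r) x"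
  using saturate_bounds[of k "box_bump l r x"]
  by (cases "x \<in> box l r") (simp_all add: box_approx_def box_bump_eq_0 saturate_def)

lemma box_approx_tendsto_indicator:
  "(\<lambda>n. box_approx (real n) l r x) \<longlonglongrightarrow> indicator (box l r) x"
proof (cases "x \<in> box l r")
  case True
  then have "box_bump l r x \<noteq> 0"
    using box_bump_pos_iff by force
  with True show ?thesis
    unfolding box_approx_def by (simp add: saturate_tendsto_1)
qed (simp add: box_approx_def box_bump_eq_0 saturate_def)

section \<open>Uniqueness of weak gradients\<close>

lemma AE_eq_if_box_nn_integrals_eq:
  fixes P N :: "'a::euclidean_space \<Rightarrow> ennreal"
  assumes [measurable]: "P \<in> borel_measurable lborel" "N \<in> borel_measurable lborel"
    and box_eq: "\<And>l r. (\<integral>\<^sup>+x. P x * indicator (box l r) x \<partial>lborel) = (\<integral>\<^sup>+x. N x * indicator (box l r) x \<partial>lborel)"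
    and box_finite: "\<And>l r. (\<integral>\<^sup>+x. P x * indicator (box l r) x \<partial>lborel) < \<infinity>"
  shows "AE x in lborel. P x = N x"
proof -
  have "density lborel P = density lborel N"
  proof (rule measure_eqI_generator_eq[where E="range (\<lambda>(l, r). box l r)" and \<Omega>=UNIV
        and A="\<lambda>n. box (- (real n *\<^sub>R One)) (real n *\<^sub>R One)"])
    have "sets (borel::'a measure) = sigma_sets UNIV (range (\<lambda>(l, r). box l r))"
      by (subst borel_eq_box) (rule sets_measure_of, simp)
    then show "sets (density lborel P) = sigma_sets UNIV (range (\<lambda>(l, r). box l r))"
      "sets (density lborel N) = sigma_sets UNIV (range (\<lambda>(l, r). box l r))"
      by simp_all
    show "(\<Union>n. box (- (real n *\<^sub>R One)) (real n *\<^sub>R One) :: 'a set) = UNIV"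
      by (rule UN_box_eq_UNIV)
    show "emeasure (density lborel P) (box (- (real n *\<^sub>R One)) (real n *\<^sub>R One)) \<noteq> \<infinity>" for n
      using box_finite by (simp add: emeasure_density less_top)
    show "Int_stable (range (\<lambda>(l, r). box l r :: 'a set))"
      by (auto simp: Int_stable_def box_Int_box)
    show "emeasure (density lborel P) X = emeasure (density lborel N) X"
      if "X \<in> range (\<lambda>(l, r). box l r)" for X
      using that box_eq by (auto simp: emeasure_density)
  qed auto
  then show ?thesis
    by (intro sigma_finite_measure.density_unique[OF sigma_finite_lborel]) auto
qed

lemma ennreal_eq_ennreal_uminus_iff: "ennreal x = ennreal (- x) \<longleftrightarrow> x = 0"
proof (cases "x \<ge> 0")
  case True
  then have "ennreal (- x) = 0"
    by (simp add: ennreal_eq_0_iff)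
  then show ?thesis
    using True ennreal_eq_0_iff[of x] by (metis order_antisym_conv)
next
  case False
  then have "ennreal x = 0"
    by (simp add: ennreal_eq_0_iff)
  then show ?thesis
    using False ennreal_eq_0_iff[of "- x"] by (metis neg_le_0_iff_le order_refl)
qed

lemma AE_zero_if_box_integrals_zero:
  fixes f :: "'a::euclidean_space \<Rightarrow> real"
  assumes f: "integrable lborel f"
    and box: "\<And>l r. (LINT x|lborel. f x * indicator (box l r) x) = 0"
  shows "AE x in lborel. f x = 0"
proof -
  have [measurable]: "f \<in> borel_measurable lborel"
    using f by auto
  define P where "P x = ennreal (f x)" for x
  define N where "N x = ennreal (- f x)" for x
  have [measurable]: "P \<in> borel_measurable lborel" "N \<in> borel_measurable lborel"
    unfolding P_def N_def by auto
  have box_finite: "(\<integral>\<^sup>+x. P x * indicator (box l r) x \<partial>lborel) < \<infinity>"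
    "(\<integral>\<^sup>+x. N x * indicator (box l r) x \<partial>lborel) < \<infinity>" for l r
  proof -
    have "(\<integral>\<^sup>+x. ennreal (norm (f x)) \<partial>lborel) < \<infinity>"
      using f unfolding integrable_iff_bounded by auto
    moreover have "(\<integral>\<^sup>+x. P x * indicator (box l r) x \<partial>lborel) \<le> (\<integral>\<^sup>+x. ennreal (norm (f x)) \<partial>lborel)"
      "(\<integral>\<^sup>+x. N x * indicator (box l r) x \<partial>lborel) \<le> (\<integral>\<^sup>+x. ennreal (norm (f x)) \<partial>lborel)"
      by (auto intro!: nn_integral_mono simp: P_def N_def split: split_indicator)
    ultimately show "(\<integral>\<^sup>+x. P x * indicator (box l r) x \<partial>lborel) < \<infinity>"
      "(\<integral>\<^sup>+x. N x * indicator (box l r) x \<partial>lborel) < \<infinity>"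
      by order+
  qed
  have "AE x in lborel. P x = N x"
  proof (rule AE_eq_if_box_nn_integrals_eq)
    fix l r :: 'a
    have int: "integrable lborel (\<lambda>x. f x * indicator (box l r) x)"
      using integrable_real_mult_indicator[OF _ f, of "box l r"] by (simp add: mult.commute)
    have "(\<integral>\<^sup>+x. ennreal (f x * indicator (box l r) x) \<partial>lborel)
        = (\<integral>\<^sup>+x. P x * indicator (box l r) x \<partial>lborel)"
      "(\<integral>\<^sup>+x. ennreal (- (f x * indicator (box l r) x)) \<partial>lborel)
        = (\<integral>\<^sup>+x. N x * indicator (box l r) x \<partial>lborel)"
      by (auto intro!: nn_integral_cong simp: P_def N_def split: split_indicator)
    then have "enn2real (\<integral>\<^sup>+x. P x * indicator (box l r) x \<partial>lborel)
        = enn2real (\<integral>\<^sup>+x. N x * indicator (box l r) x \<partial>lborel)"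
      using real_lebesgue_integral_def[OF int] box[of l r] by simp
    then show "(\<integral>\<^sup>+x. P x * indicator (box l r) x \<partial>lborel)
        = (\<integral>\<^sup>+x. N x * indicator (box l r) x \<partial>lborel)"
      using ennreal_enn2real[OF box_finite(1)[of l r, unfolded infinity_ennreal_def]]
        ennreal_enn2real[OF box_finite(2)[of l r, unfolded infinity_ennreal_def]]
      by metis
    show "(\<integral>\<^sup>+x. P x * indicator (box l r) x \<partial>lborel) < \<infinity>"
      by (rule box_finite)
  qed measurable
  then show ?thesis
    by eventually_elim (simp add: P_def N_def ennreal_eq_ennreal_uminus_iff)
qed

lemma AE_zero_if_box_integrals_zero_local:
  fixes f :: "'a::euclidean_space \<Rightarrow> real"
  assumes int: "\<And>l r. integrable lborel (\<lambda>x. f x * indicator (box l r) x)"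
    and box: "\<And>l r. (LINT x|lborel. f x * indicator (box l r) x) = 0"
  shows "AE x in lborel. f x = 0"
proof -
  define B where "B n = box (- (real n *\<^sub>R One)) (real n *\<^sub>R One :: 'a)" for n :: nat
  have "AE x in lborel. f x * indicator (B n) x = 0" for n
  proof (rule AE_zero_if_box_integrals_zero)
    show "integrable lborel (\<lambda>x. f x * indicator (B n) x)"
      using int by (simp add: B_def)
    fix l r :: 'a
    obtain l' r' where "box l r \<inter> B n = box l' r'"
      unfolding B_def box_Int_box by blast
    then have "(\<lambda>x. f x * indicator (B n) x * indicator (box l r) x) = (\<lambda>x. f x * indicator (box l' r') x)"
      by (auto simp: fun_eq_iff split: split_indicator)
    then show "(LINT x|lborel. f x * indicator (B n) x * indicator (box l r) x) = 0"
      using box by simp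
  qed
  then have "AE x in lborel. \<forall>n. f x * indicator (B n) x = 0"
    by (subst AE_all_countable) blast
  then show ?thesis
  proof eventually_elim
    case (elim x)
    obtain n where "x \<in> B n"
      using UN_box_eq_UNIV unfolding B_def by blast
    with elim show ?case
      by (metis indicator_simps(1) mult.right_neutral)
  qed
qed

lemma abs_le_square_plus_1: "\<bar>t::real\<bar> \<le> t\<^sup>2 + 1"
proof -
  have "0 \<le> (\<bar>t\<bar> - 1)\<^sup>2 + \<bar>t\<bar>"
    by simp
  then show ?thesis
    by (simp add: power2_diff power2_abs)
qed

lemma integrable_mult_dominated_by_indicator:
  fixes f c :: "'a \<Rightarrow> real"
  assumes "f \<in> borel_measurable M" "integrable M (\<lambda>x. (f x)\<^sup>2)"
    and "c \<in> borel_measurable M" "integrable M (indicator A :: 'a \<Rightarrow> real)"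
    and c_le: "\<And>x. \<bar>c x\<bar> \<le> indicator A x"
  shows "integrable M (\<lambda>x. f x * c x)"
proof (rule Bochner_Integration.integrable_bound)
  show "integrable M (\<lambda>x. (f x)\<^sup>2 + indicator A x)"
    using assms by (intro Bochner_Integration.integrable_add)
  show "AE x in M. norm (f x * c x) \<le> norm ((f x)\<^sup>2 + indicator A x)"
  proof (intro AE_I2)
    fix x
    have "\<bar>f x * c x\<bar> \<le> \<bar>f x\<bar> * indicator A x"
      unfolding abs_mult by (intro mult_left_mono c_le) auto
    also have "\<dots> \<le> (f x)\<^sup>2 + indicator A x"
      using abs_le_square_plus_1[of "f x"] by (auto split: split_indicator)
    finally show "norm (f x * c x) \<le> norm ((f x)\<^sup>2 + indicator A x)"
      by simp
  qed
qed (use assms in measurable)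

lemma measurable_vec_nth [measurable]:
  "g \<in> borel_measurable M \<Longrightarrow> (\<lambda>x. g x $ i) \<in> borel_measurable M"
  by (rule borel_measurable_continuous_on[of "\<lambda>y. y $ i"]) (auto intro: continuous_intros)

lemma integrable_indicator_box: "integrable lborel (indicator (box l r) :: 'a::euclidean_space \<Rightarrow> real)"
  using emeasure_bounded_finite[OF bounded_box[of l r]]
  by (intro integrable_real_indicator) (auto simp: infinity_ennreal_def)

lemma L2grad_component:
  assumes "L2grad u g"
  shows "(\<lambda>x. g x $ i) \<in> borel_measurable lborel" "integrable lborel (\<lambda>x. (g x $ i)\<^sup>2)"
proof -
  have [measurable]: "g \<in> borel_measurable lborel" and g_sq: "integrable lborel (\<lambda>x. (norm (g x))\<^sup>2)"
    using assms unfolding L2grad_def by auto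
  show "(\<lambda>x. g x $ i) \<in> borel_measurable lborel"
    by measurable
  show "integrable lborel (\<lambda>x. (g x $ i)\<^sup>2)"
  proof (rule Bochner_Integration.integrable_bound[OF g_sq])
    show "AE x in lborel. norm ((g x $ i)\<^sup>2) \<le> norm ((norm (g x))\<^sup>2)"
    proof (intro AE_I2)
      fix x
      have "\<bar>g x $ i\<bar>\<^sup>2 \<le> (norm (g x))\<^sup>2"
        by (intro power_mono component_le_norm_cart) simp
      then show "norm ((g x $ i)\<^sup>2) \<le> norm ((norm (g x))\<^sup>2)"
        by simp
    qed
  qed measurable
qed

lemma integrable_L2grad_mult:
  assumes "L2grad u g" "c \<in> borel_measurable lborel" "\<And>x. \<bar>c x\<bar> \<le> indicator (box l r) x"
  shows "integrable lborel (\<lambda>x. g x $ i * c x)"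
  using assms by (intro integrable_mult_dominated_by_indicator[where A="box l r"] L2grad_component
      integrable_indicator_box)

lemma L2grad_test_fun_integral_eq:
  assumes "L2grad u g1" "L2grad u g2" "test_fun \<phi> D"
  shows "(LINT x|lborel. g1 x $ i * \<phi> x) = (LINT x|lborel. g2 x $ i * \<phi> x)"
proof -
  have "- (LINT x|lborel. g1 x $ i * \<phi> x) = - (LINT x|lborel. g2 x $ i * \<phi> x)"
    using assms unfolding L2grad_def weak_grad_def by (metis (no_types))
  then show ?thesis
    by simp
qed

lemma box_approx_integral_tendsto:
  fixes h :: "R2 \<Rightarrow> real"
  assumes [measurable]: "h \<in> borel_measurable lborel"
    and h_box: "integrable lborel (\<lambda>x. h x * indicator (box l r) x)"
  shows "(\<lambda>n. LINT x|lborel. h x * box_approx (real n) l r x)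
    \<longlonglongrightarrow> (LINT x|lborel. h x * indicator (box l r) x)"
proof (rule integral_dominated_convergence[where w="\<lambda>x. \<bar>h x * indicator (box l r) x\<bar>"])
  show "integrable lborel (\<lambda>x. \<bar>h x * indicator (box l r) x\<bar>)"
    using h_box by (rule integrable_abs)
  show "AE x in lborel. (\<lambda>n. h x * box_approx (real n) l r x) \<longlonglongrightarrow> h x * indicator (box l r) x"
    by (intro AE_I2 tendsto_mult_left box_approx_tendsto_indicator)
  show "AE x in lborel. norm (h x * box_approx (real n) l r x) \<le> \<bar>h x * indicator (box l r) x\<bar>" for n
    unfolding abs_mult norm_mult real_norm_def
    by (intro AE_I2 mult_left_mono) (simp_all add: box_approx_le_indicator)
  show "(\<lambda>x. h x * box_approx (real n) l r x) \<in> borel_measurable lborel" for n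
    using box_approx_measurable[of "real n" l r] by measurable
qed measurable

text \<open>Testing against \<open>box_approx\<close> and letting \<open>k \<rightarrow> \<infinity>\<close> shows that two weak gradients
  have the same integral over every box.\<close>
lemma L2grad_unique:
  assumes g1: "L2grad u g1" and g2: "L2grad u g2"
  shows "AE x in lborel. g1 x = g2 x"
proof -
  have "AE x in lborel. g1 x $ i - g2 x $ i = 0" for i
  proof (rule AE_zero_if_box_integrals_zero_local)
    fix l r :: R2
    define h where "h x = g1 x $ i - g2 x $ i" for x
    have h_meas [measurable]: "h \<in> borel_measurable lborel"
      unfolding h_def using L2grad_component[OF g1] L2grad_component[OF g2] by measurable
    have int_box: "integrable lborel (\<lambda>x. g x $ i * indicator (box l r) x)" if "L2grad u g" for g
      using that by (rule integrable_L2grad_mult) auto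
    have int_approx: "integrable lborel (\<lambda>x. g x $ i * box_approx (real n) l r x)"
      if "L2grad u g" for g n
      using that box_approx_measurable box_approx_le_indicator by (rule integrable_L2grad_mult) simp_all
    have h_box: "integrable lborel (\<lambda>x. h x * indicator (box l r) x)"
      unfolding h_def left_diff_distrib by (intro Bochner_Integration.integrable_diff int_box g1 g2)
    then show "integrable lborel (\<lambda>x. (g1 x $ i - g2 x $ i) * indicator (box l r) x)"
      by (simp add: h_def)
    have approx_0: "(LINT x|lborel. h x * box_approx (real n) l r x) = 0" for n
    proof -
      obtain D where "test_fun (box_approx (real n) l r) D"
        using test_fun_box_approx[of "real n"] by auto
      then show ?thesis
        unfolding h_def left_diff_distrib
        by (simp add: Bochner_Integration.integral_diff int_approx[OF g1] int_approx[OF g2]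
            L2grad_test_fun_integral_eq[OF g1 g2])
    qed
    have "(\<lambda>n. 0) \<longlonglongrightarrow> (LINT x|lborel. h x * indicator (box l r) x)"
      using box_approx_integral_tendsto[OF h_meas h_box] unfolding approx_0 .
    then have "(LINT x|lborel. h x * indicator (box l r) x) = 0"
      by (metis LIMSEQ_const_iff)
    then show "(LINT x|lborel. (g1 x $ i - g2 x $ i) * indicator (box l r) x) = 0"
      by (simp add: h_def)
  qed
  then have "AE x in lborel. \<forall>i. g1 x $ i - g2 x $ i = 0"
    by (subst AE_all_countable) blast
  then show ?thesis
    by eventually_elim (simp add: vec_eq_iff)
qed

section \<open>Homogeneity and derivatives along lines\<close>

lemma L2grad_scale:
  assumes "L2grad u g"
  shows "L2grad (\<lambda>x. c * u x) (\<lambda>x. c *\<^sub>R g x)"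
proof -
  have [measurable]: "g \<in> borel_measurable lborel"
    and g_sq: "integrable lborel (\<lambda>x. (norm (g x))\<^sup>2)" and weak: "weak_grad u g"
    using assms unfolding L2grad_def by auto
  have "integrable lborel (\<lambda>x. (norm (c *\<^sub>R g x))\<^sup>2)"
    using g_sq by (simp add: power_mult_distrib)
  moreover have "weak_grad (\<lambda>x. c * u x) (\<lambda>x. c *\<^sub>R g x)"
    using weak unfolding weak_grad_def by (simp add: mult.assoc)
  ultimately show ?thesis
    unfolding L2grad_def by simp
qed

lemma H1_scale: "H1 u \<Longrightarrow> H1 (\<lambda>x. c * u x)"
  unfolding H1_def using L2grad_scale by (auto simp: power_mult_distrib)

lemma inX_scale: "inX p u \<Longrightarrow> inX p (\<lambda>x. c * u x)"
  unfolding inX_def using H1_scale by (auto simp: abs_mult powr_mult mult.left_commute)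

lemma L2grad_grad: "H1 u \<Longrightarrow> L2grad u (grad u)"
  unfolding H1_def grad_def by (auto intro: someI[where P="L2grad u"])

lemma H1norm_scale:
  assumes u: "H1 u" and [measurable]: "a \<in> borel_measurable lborel"
  shows "H1norm a (\<lambda>x. c * u x) = \<bar>c\<bar> * H1norm a u"
proof -
  have [measurable]: "u \<in> borel_measurable lborel" "grad u \<in> borel_measurable lborel"
    "grad (\<lambda>x. c * u x) \<in> borel_measurable lborel"
    using u L2grad_grad[OF u] L2grad_grad[OF H1_scale[OF u]] unfolding H1_def L2grad_def by auto
  have "AE x in lborel. grad (\<lambda>x. c * u x) x = c *\<^sub>R grad u x"
    using L2grad_unique[OF L2grad_grad[OF H1_scale[OF u]] L2grad_scale[OF L2grad_grad[OF u]]] .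
  then have "(LINT x|lborel. (norm (grad (\<lambda>x. c * u x) x))\<^sup>2 + a x * (c * u x)\<^sup>2)
      = (LINT x|lborel. c\<^sup>2 * ((norm (grad u x))\<^sup>2 + a x * (u x)\<^sup>2))"
    by (intro integral_cong_AE) (auto elim!: eventually_mono simp: power_mult_distrib algebra_simps)
  also have "\<dots> = c\<^sup>2 * (LINT x|lborel. (norm (grad u x))\<^sup>2 + a x * (u x)\<^sup>2)"
    by (rule integral_mult_right_zero)
  finally show ?thesis
    unfolding H1norm_def by (simp only: real_sqrt_mult real_sqrt_abs)
qed

text \<open>\<open>sqrt\<close> is odd (\<open>sqrt (- x) = - sqrt x\<close>), so nonnegativity of \<open>H1norm\<close> needs \<open>a \<ge> 0\<close>.\<close>
lemma H1norm_nonneg: "(\<And>x. a x \<ge> 0) \<Longrightarrow> H1norm a u \<ge> 0"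
  unfolding H1norm_def by (simp add: integral_nonneg_AE)

lemma Xnorm_nonneg: "(\<And>x. a x \<ge> 0) \<Longrightarrow> Xnorm a p u \<ge> 0"
  unfolding Xnorm_def by (simp add: H1norm_nonneg)

lemma Xnorm_scale:
  assumes u: "inX p u" and a: "a \<in> borel_measurable lborel" and p: "p > 0"
  shows "Xnorm a p (\<lambda>x. c * u x) = \<bar>c\<bar> * Xnorm a p u"
proof -
  define W where "W = (LINT x|lborel. ln (1 + norm x) * \<bar>u x\<bar> powr p)"
  have "W \<ge> 0"
    unfolding W_def by (intro integral_nonneg_AE) auto
  have "(LINT x|lborel. ln (1 + norm x) * \<bar>c * u x\<bar> powr p) = \<bar>c\<bar> powr p * W"
    unfolding W_def by (simp add: abs_mult powr_mult mult.left_commute)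
  also have "\<dots> powr (1 / p) = \<bar>c\<bar> * W powr (1 / p)"
    using \<open>W \<ge> 0\<close> p by (simp add: powr_mult powr_powr)
  finally show ?thesis
    using u H1norm_scale[OF _ a] unfolding Xnorm_def W_def inX_def by (simp add: algebra_simps)
qed

lemma DERIV_at_0_if_remainder_small:
  fixes G :: "real \<Rightarrow> real"
  assumes "X \<ge> 0"
    and small: "\<And>\<epsilon>. \<epsilon> > 0 \<Longrightarrow> \<exists>\<delta>>0. \<forall>t. \<bar>t\<bar> * X < \<delta> \<longrightarrow> \<bar>G t - G 0 - t * D\<bar> \<le> \<epsilon> * (\<bar>t\<bar> * X)"
  shows "(G has_real_derivative D) (at 0)"
proof -
  have "((\<lambda>t. (G t - G 0) / t) \<longlongrightarrow> D) (at 0)"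
    unfolding LIM_eq
  proof (intro allI impI)
    fix r :: real
    assume "r > 0"
    then obtain \<delta> where "\<delta> > 0" and \<delta>: "\<And>t. \<bar>t\<bar> * X < \<delta> \<Longrightarrow> \<bar>G t - G 0 - t * D\<bar> \<le> r / (X + 1) * (\<bar>t\<bar> * X)"
      using small[of "r / (X + 1)"] \<open>X \<ge> 0\<close> by auto
    show "\<exists>s>0. \<forall>t. t \<noteq> 0 \<and> norm (t - 0) < s \<longrightarrow> norm ((G t - G 0) / t - D) < r"
    proof (intro exI[of _ "\<delta> / (X + 1)"] conjI allI impI)
      show "\<delta> / (X + 1) > 0"
        using \<open>\<delta> > 0\<close> \<open>X \<ge> 0\<close> by simp
      fix t :: real
      assume t: "t \<noteq> 0 \<and> norm (t - 0) < \<delta> / (X + 1)"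
      have "\<bar>t\<bar> * X \<le> \<bar>t\<bar> * (X + 1)"
        by (simp add: mult_left_mono)
      also have "\<dots> < \<delta>"
        using t \<open>X \<ge> 0\<close> by (simp add: less_divide_eq)
      finally have "\<bar>G t - G 0 - t * D\<bar> \<le> r / (X + 1) * (\<bar>t\<bar> * X)"
        by (rule \<delta>)
      then have "\<bar>G t - G 0 - t * D\<bar> \<le> r / (X + 1) * X * \<bar>t\<bar>"
        by (simp only: ac_simps)
      then have "\<bar>G t - G 0 - t * D\<bar> / \<bar>t\<bar> \<le> r / (X + 1) * X"
        using t by (simp add: pos_divide_le_eq)
      moreover have "(G t - G 0) / t - D = (G t - G 0 - t * D) / t"
        using t by (simp add: field_simps)
      ultimately have "\<bar>(G t - G 0) / t - D\<bar> \<le> r / (X + 1) * X"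
        by (simp add: abs_divide)
      also have "\<dots> < r"
        using \<open>r > 0\<close> \<open>X \<ge> 0\<close> by (simp add: divide_less_eq)
      finally show "norm ((G t - G 0) / t - D) < r"
        by simp
    qed
  qed
  then show ?thesis
    by (simp add: has_field_derivative_iff)
qed

lemma X_deriv_imp_DERIV_line:
  assumes deriv: "X_deriv a p F U L" and V: "inX p V"
    and a: "a \<in> borel_measurable lborel" and a_nonneg: "\<And>x. a x \<ge> 0" and p: "p > 0"
  shows "((\<lambda>t. F (\<lambda>x. U x + t * V x)) has_real_derivative L V) (at 0)"
proof (rule DERIV_at_0_if_remainder_small)
  show "Xnorm a p V \<ge> 0"
    using a_nonneg by (rule Xnorm_nonneg)
  fix \<epsilon> :: real
  assume "\<epsilon> > 0"
  then obtain \<delta> where "\<delta> > 0" and \<delta>: "\<And>v. inX p v \<Longrightarrow> Xnorm a p v < \<delta> \<Longrightarrow>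
      \<bar>F (\<lambda>x. U x + v x) - F U - L v\<bar> \<le> \<epsilon> * Xnorm a p v"
    using deriv unfolding X_deriv_def by meson
  have "L (\<lambda>x. t * V x) = t * L V" for t
    using deriv V unfolding X_deriv_def by blast
  then have "\<bar>F (\<lambda>x. U x + t * V x) - F U - t * L V\<bar> \<le> \<epsilon> * (\<bar>t\<bar> * Xnorm a p V)"
    if "\<bar>t\<bar> * Xnorm a p V < \<delta>" for t
    using \<delta>[OF inX_scale[OF V, of t]] that Xnorm_scale[OF V a p, of t] by simp
  with \<open>\<delta> > 0\<close> show "\<exists>\<delta>>0. \<forall>t. \<bar>t\<bar> * Xnorm a p V < \<delta> \<longrightarrow>
      \<bar>F (\<lambda>x. U x + t * V x) - F (\<lambda>x. U x + 0 * V x) - t * L V\<bar> \<le> \<epsilon> * (\<bar>t\<bar> * Xnorm a p V)"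
    by auto
qed

lemma dual_normX_upper:
  assumes deriv: "X_deriv a p F U L" and a_nonneg: "\<And>x. a x \<ge> 0"
    and v: "inX p v" "Xnorm a p v \<le> 1"
  shows "\<bar>L v\<bar> \<le> dual_normX a p L"
  unfolding dual_normX_def
proof (rule cSup_upper)
  obtain K where K: "\<And>w. inX p w \<Longrightarrow> \<bar>L w\<bar> \<le> K * Xnorm a p w"
    using deriv unfolding X_deriv_def by blast
  show "bdd_above {\<bar>L w\<bar> |w. inX p w \<and> Xnorm a p w \<le> 1}"
  proof (rule bdd_aboveI, clarify)
    fix w
    assume w: "inX p w" "Xnorm a p w \<le> 1"
    have "\<bar>L w\<bar> \<le> max K 0 * Xnorm a p w"
      using K[OF w(1)] mult_right_mono[OF max.cobounded1 Xnorm_nonneg[OF a_nonneg]]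
      by (rule order_trans)
    also have "\<dots> \<le> max K 0"
      using w(2) Xnorm_nonneg[OF a_nonneg] by (simp add: mult_left_le)
    finally show "\<bar>L w\<bar> \<le> max K 0" .
  qed
qed (use v in blast)

lemma dual_normX_bound:
  assumes deriv: "X_deriv a p F U L" and V: "inX p V"
    and a: "a \<in> borel_measurable lborel" and a_nonneg: "\<And>x. a x \<ge> 0" and p: "p > 0"
  shows "0 \<le> dual_normX a p L" and "\<bar>L V\<bar> \<le> dual_normX a p L * Xnorm a p V"
proof -
  have hom: "L (\<lambda>x. c * V x) = c * L V" for c
    using deriv V unfolding X_deriv_def by blast
  have scaled: "\<bar>c\<bar> * \<bar>L V\<bar> \<le> dual_normX a p L" if "\<bar>c\<bar> * Xnorm a p V \<le> 1" for c
  proof -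
    have "Xnorm a p (\<lambda>x. c * V x) \<le> 1"
      using Xnorm_scale[OF V a p, of c] that by simp
    from dual_normX_upper[OF deriv a_nonneg inX_scale[OF V] this] show ?thesis
      by (simp only: hom abs_mult)
  qed
  show "0 \<le> dual_normX a p L"
    using scaled[of 0] by simp
  show "\<bar>L V\<bar> \<le> dual_normX a p L * Xnorm a p V"
  proof (cases "Xnorm a p V = 0")
    case True
    obtain K where "\<And>w. inX p w \<Longrightarrow> \<bar>L w\<bar> \<le> K * Xnorm a p w"
      using deriv unfolding X_deriv_def by blast
    with V True show ?thesis
      by fastforce
  next
    case False
    then have "Xnorm a p V > 0"
      using Xnorm_nonneg[OF a_nonneg] by (simp add: less_le)
    then show ?thesis
      using scaled[of "1 / Xnorm a p V"] by (simp add: divide_le_eq mult.commute)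
  qed
qed

definition log_interaction :: "real \<Rightarrow> (R2 \<Rightarrow> real) \<Rightarrow> real" where
  "log_interaction p u =
     (LINT x|lborel. LINT y|lborel. ln (norm (x - y)) * \<bar>u x\<bar> powr p * \<bar>u y\<bar> powr p)"

definition power_integral :: "real \<Rightarrow> (R2 \<Rightarrow> real) \<Rightarrow> real" where
  "power_integral q u = (LINT x|lborel. \<bar>u x\<bar> powr q)"

lemma Ifun_eq:
  "Ifun a \<gamma> b p q u =
     1 / 2 * (H1norm a u)\<^sup>2 + \<gamma> / (4 * p * pi) * log_interaction p u - b / q * power_integral q u"
  unfolding Ifun_def log_interaction_def power_integral_def ..

lemma power_integral_nonneg: "power_integral q u \<ge> 0"
  unfolding power_integral_def by (simp add: integral_nonneg_AE)

lemma log_interaction_scale: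
  "log_interaction p (\<lambda>x. c * u x) = (\<bar>c\<bar> powr p)\<^sup>2 * log_interaction p u"
proof -
  have "ln (norm (x - y)) * \<bar>c * u x\<bar> powr p * \<bar>c * u y\<bar> powr p
      = (\<bar>c\<bar> powr p)\<^sup>2 * (ln (norm (x - y)) * \<bar>u x\<bar> powr p * \<bar>u y\<bar> powr p)" for x y
    by (simp add: abs_mult powr_mult power2_eq_square)
  then show ?thesis
    unfolding log_interaction_def by (simp only: integral_mult_right_zero)
qed

lemma power_integral_scale: "power_integral q (\<lambda>x. c * u x) = \<bar>c\<bar> powr q * power_integral q u"
  unfolding power_integral_def by (simp add: abs_mult powr_mult)

lemma Ifun_ray:
  assumes u: "H1 u" and a: "a \<in> borel_measurable lborel" and t: "t > -1"
  shows "Ifun a \<gamma> b p q (\<lambda>x. u x + t * u x) =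
    1 / 2 * (1 + t)\<^sup>2 * (H1norm a u)\<^sup>2 + \<gamma> / (4 * p * pi) * ((1 + t) powr p)\<^sup>2 * log_interaction p u
    - b / q * (1 + t) powr q * power_integral q u"
proof -
  have "(\<lambda>x. u x + t * u x) = (\<lambda>x. (1 + t) * u x)"
    by (simp add: algebra_simps)
  then have "Ifun a \<gamma> b p q (\<lambda>x. u x + t * u x) = Ifun a \<gamma> b p q (\<lambda>x. (1 + t) * u x)"
    by simp
  also have "\<dots> = 1 / 2 * (1 + t)\<^sup>2 * (H1norm a u)\<^sup>2
      + \<gamma> / (4 * p * pi) * ((1 + t) powr p)\<^sup>2 * log_interaction p u
      - b / q * (1 + t) powr q * power_integral q u"
    using t unfolding Ifun_eq log_interaction_scale power_integral_scale H1norm_scale[OF u a]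
    by (simp add: power_mult_distrib)
  finally show ?thesis .
qed

lemma DERIV_ray_polynomial:
  fixes H B C g b p q :: real
  shows "((\<lambda>t. 1 / 2 * (1 + t)\<^sup>2 * H + g * ((1 + t) powr p)\<^sup>2 * B - b * (1 + t) powr q * C)
     has_real_derivative (H + 2 * p * g * B - q * b * C)) (at 0)"
proof -
  have "((\<lambda>t. (1 + t) powr r) has_real_derivative r) (at 0)" for r :: real
    using DERIV_powr[of "\<lambda>t. 1 + t" 1 0 "\<lambda>_. r" 0] by (auto intro!: derivative_eq_intros)
  from DERIV_power[OF this[of p], of 2] this[of q] show ?thesis
    by (auto intro!: derivative_eq_intros simp: algebra_simps)
qed

text \<open>Differentiating \<open>t \<mapsto> I((1 + t) U)\<close> at \<open>t = 0\<close> evaluates \<open>I'(U) U\<close>.\<close>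
lemma X_deriv_Ifun_self:
  assumes deriv: "X_deriv a p (Ifun a \<gamma> b p q) U L" and U: "inX p U"
    and a: "a \<in> borel_measurable lborel" and a_nonneg: "\<And>x. a x \<ge> 0" and p: "p > 0"
    and q: "q > 0"
  shows "L U = (H1norm a U)\<^sup>2 + \<gamma> / (2 * pi) * log_interaction p U - b * power_integral q U"
proof -
  define ray where "ray t = 1 / 2 * (1 + t)\<^sup>2 * (H1norm a U)\<^sup>2
    + \<gamma> / (4 * p * pi) * ((1 + t) powr p)\<^sup>2 * log_interaction p U
    - b / q * (1 + t) powr q * power_integral q U" for t
  have "H1 U"
    using U unfolding inX_def by simp
  have "\<forall>\<^sub>F t in nhds 0. t \<in> {-1::real<..}"
    by (rule eventually_nhds_in_open) auto
  then have "\<forall>\<^sub>F t in nhds 0. Ifun a \<gamma> b p q (\<lambda>x. U x + t * U x) = ray t"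
    by (rule eventually_mono) (simp add: ray_def Ifun_ray[OF \<open>H1 U\<close> a])
  from DERIV_cong_ev[OF refl this refl] X_deriv_imp_DERIV_line[OF deriv U a a_nonneg p]
  have "(ray has_real_derivative L U) (at 0)"
    by simp
  moreover have "(ray has_real_derivative (H1norm a U)\<^sup>2 + 2 * p * (\<gamma> / (4 * p * pi)) * log_interaction p U
      - q * (b / q) * power_integral q U) (at 0)"
    unfolding ray_def by (rule DERIV_ray_polynomial)
  ultimately show ?thesis
    using p q by (simp add: DERIV_unique)
qed

section \<open>The Palais--Smale bound\<close>

lemma periodic_continuous_bdd_below:
  fixes a :: "R2 \<Rightarrow> real"
  assumes cont: "continuous_on UNIV a"
    and per: "\<forall>x k. (\<forall>i. k $ i \<in> \<int>) \<longrightarrow> a (x + k) = a x"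
  shows "bdd_below (range a)"
proof -
  have "bdd_below (a ` cbox 0 1)"
    by (intro bounded_imp_bdd_below compact_imp_bounded compact_continuous_image
        continuous_on_subset[OF cont]) auto
  moreover have "range a \<subseteq> a ` cbox 0 1"
  proof clarify
    fix x :: R2
    define k :: R2 where "k = (\<chi> i. of_int \<lfloor>x $ i\<rfloor>)"
    have "x - k \<in> cbox 0 1"
      unfolding k_def mem_box_cart by (simp add: of_int_floor_le) (smt (verit) real_of_int_floor_add_one_gt)
    moreover have "a x = a (x - k)"
      using per[rule_format, of k "x - k"] by (simp add: k_def)
    ultimately show "a x \<in> a ` cbox 0 1"
      by blast
  qed
  ultimately show ?thesis
    by (rule bdd_below_mono)
qed

text \<open>The Ambrosetti--Rabinowitz combination \<open>I(u) - I'(u) u / (2 p)\<close>: for \<open>q \<ge> 2 p\<close> the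
  \<open>L\<^sup>q\<close> term has a good sign and the logarithmic term cancels.\<close>
lemma energy_minus_derivative_bound:
  fixes H B C S X \<gamma> b p q :: real
  assumes p: "p \<ge> 2" and q: "q \<ge> 2 * p" and b: "b \<ge> 0" and C: "C \<ge> 0"
    and S: "S \<ge> 0" and X: "X \<ge> 0"
    and deriv: "\<bar>H\<^sup>2 + \<gamma> / (2 * pi) * B - b * C\<bar> \<le> S * X"
  shows "H\<^sup>2 / 4 \<le> (1 / 2 * H\<^sup>2 + \<gamma> / (4 * p * pi) * B - b / q * C) + S * (1 + X)"
proof -
  define I where "I = 1 / 2 * H\<^sup>2 + \<gamma> / (4 * p * pi) * B - b / q * C"
  define D where "D = H\<^sup>2 + \<gamma> / (2 * pi) * B - b * C"
  have "I - D / (2 * p) = (1 / 2 - 1 / (2 * p)) * H\<^sup>2 + (1 / (2 * p) - 1 / q) * b * C"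
    using p q unfolding I_def D_def by (simp add: field_simps)
  moreover have "H\<^sup>2 / 4 \<le> (1 / 2 - 1 / (2 * p)) * H\<^sup>2"
  proof -
    have "1 / 4 \<le> 1 / 2 - 1 / (2 * p)"
      using p by (simp add: field_simps)
    then show ?thesis
      using mult_right_mono[of "1 / 4" _ "H\<^sup>2"] by simp
  qed
  moreover have "0 \<le> (1 / (2 * p) - 1 / q) * b * C"
    using p q b C by (intro mult_nonneg_nonneg) (auto simp: divide_simps)
  moreover have "- (D / (2 * p)) \<le> \<bar>D\<bar>"
  proof -
    have "\<bar>D\<bar> * 1 \<le> \<bar>D\<bar> * (2 * p)"
      using p by (intro mult_left_mono) auto
    then have "\<bar>D / (2 * p)\<bar> \<le> \<bar>D\<bar>"
      using p by (simp add: abs_divide divide_le_eq)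
    then show ?thesis
      by linarith
  qed
  moreover have "S * X \<le> S * (1 + X)"
    using S by (simp add: mult_left_mono)
  ultimately show ?thesis
    using deriv unfolding I_def[symmetric] D_def[symmetric] by linarith
qed

lemma PS_H1norm_bound:
  assumes deriv: "X_deriv a p (Ifun a \<gamma> b p q) u L" and u: "inX p u"
    and a: "a \<in> borel_measurable lborel" and a_nonneg: "\<And>x. a x \<ge> 0"
    and p: "p \<ge> 2" and q: "q \<ge> 2 * p" and b: "b \<ge> 0"
  shows "(H1norm a u)\<^sup>2 / 4 \<le> Ifun a \<gamma> b p q u + dual_normX a p L * (1 + Xnorm a p u)"
proof -
  have "p > 0" "q > 0"
    using p q by auto
  have "\<bar>L u\<bar> \<le> dual_normX a p L * Xnorm a p u"
    by (rule dual_normX_bound(2)[OF deriv u a a_nonneg \<open>p > 0\<close>])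
  then show ?thesis
    unfolding Ifun_eq X_deriv_Ifun_self[OF deriv u a a_nonneg \<open>p > 0\<close> \<open>q > 0\<close>]
    by (rule energy_minus_derivative_bound[OF p q b power_integral_nonneg
          dual_normX_bound(1)[OF deriv u a a_nonneg \<open>p > 0\<close>] Xnorm_nonneg[OF a_nonneg]])
qed

theorem lemma3p5:
  fixes a :: "R2 \<Rightarrow> real" and \<gamma> b p q d :: real and u :: "nat \<Rightarrow> R2 \<Rightarrow> real"
  assumes a_cont: "continuous_on UNIV a"
    and a_per: "\<forall>x k. (\<forall>i. k $ i \<in> \<int>) \<longrightarrow> a (x + k) = a x"
    and a_pos: "(INF x. a x) > 0"
    and "\<gamma> > 0" and "b \<ge> 0" and "p \<ge> 2" and "q \<ge> 2 * p"
    and uX: "\<forall>n. inX p (u n)"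
    and lim: "(\<lambda>n. Ifun a \<gamma> b p q (u n)) \<longlonglongrightarrow> d" and "d > 0"
    and PS: "\<exists>L. (\<forall>n. X_deriv a p (Ifun a \<gamma> b p q) (u n) (L n)) \<and>
               (\<lambda>n. dual_normX a p (L n) * (1 + Xnorm a p (u n))) \<longlonglongrightarrow> 0"
  shows "\<exists>C. \<forall>n. H1norm a (u n) \<le> C"
proof -
  obtain L where L: "\<And>n. X_deriv a p (Ifun a \<gamma> b p q) (u n) (L n)"
    and L_lim: "(\<lambda>n. dual_normX a p (L n) * (1 + Xnorm a p (u n))) \<longlonglongrightarrow> 0"
    using PS by blast
  have a_meas: "a \<in> borel_measurable lborel"
    using a_cont by (simp add: borel_measurable_continuous_onI)
  have a_nonneg: "a x \<ge> 0" for x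
    using cINF_lower[OF periodic_continuous_bdd_below[OF a_cont a_per], of x] a_pos by simp
  obtain K1 where K1: "\<And>n. norm (Ifun a \<gamma> b p q (u n)) \<le> K1"
    using convergent_imp_Bseq[OF convergentI[OF lim]] unfolding Bseq_def by blast
  obtain K2 where K2: "\<And>n. norm (dual_normX a p (L n) * (1 + Xnorm a p (u n))) \<le> K2"
    using convergent_imp_Bseq[OF convergentI[OF L_lim]] unfolding Bseq_def by blast
  have "(H1norm a (u n))\<^sup>2 \<le> 4 * (K1 + K2)" for n
    using PS_H1norm_bound[OF L uX[rule_format] a_meas a_nonneg \<open>p \<ge> 2\<close> \<open>q \<ge> 2 * p\<close> \<open>b \<ge> 0\<close>, of n]
      K1[of n] K2[of n]
    by simp
  then have "H1norm a (u n) \<le> sqrt (4 * (K1 + K2))" for n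
    using real_sqrt_le_mono[of "(H1norm a (u n))\<^sup>2"] by fastforce
  then show ?thesis
    by blast
qed

end
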